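(* Let $a$ be a fixed positive integer. For any positive integers $k,n$ with $k\ge n$, $$S_t(N_{k,n})=\sum_{j=0}^{k-1}\left[\sum_{i=1}^{\min\{n,k-j\}}(-1)^{k-i-j}\binom{k-i}{k-n}\binom{k-j}{i}t^{n-i}\right]S(z_a^j)\ast z_a^{k-j}.$$ In particular, if $a>1$, $$\sum_{\substack{k_1+\cdots+k_n=k\\ k_i\ge1}}\zeta^t(ak_1,\ldots,ak_n)=\sum_{j=0}^{k-1}\left[\sum_{i=1}^{\min\{n,k-j\}}(-1)^{k-i-j}\binom{k-i}{k-n}\binom{k-j}{i}t^{n-i}\right]\zeta^\star(\{a\}^j)\zeta(\{a\}^{k-j}).$$
   Context: $\mathfrak{h}_t=\mathbb{Q}[t]\langle x,y\rangle$ ($1$ = empty word), $\mathfrak{h}^1_t=\mathbb{Q}[t]+\mathfrak{h}_ty$, $z_k=x^{k-1}y$, $z_a^j$ a concatenation power. $N_{k,n}=\sum_{k_1+\cdots+k_n=k,\ k_i\ge1}z_{ak_1}\cdots z_{ak_n}$. For a parameter $s$, $\sigma_s$ is the algebra automorphism with $\sigma_s(x)=x,\sigma_s(y)=sx+y$ and $S_s$ is the linear map with $S_s(1)=1$, $S_s(wa)=\sigma_s(w)a$ for words $w$ and letters $a$; $S:=S_1$. The harmonic product $\ast$ on $\mathfrak{h}^1_t$ is the $\mathbb{Q}[t]$-bilinear product with $1\ast w=w\ast1=w$ and $z_kw_1\ast z_lw_2=z_k(w_1\ast z_lw_2)+z_l(z_kw_1\ast w_2)+z_{k+l}(w_1\ast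 w_2)$. $\{a\}^j$ is $j$ repetitions of $a$; values at the empty index are $1$. For $k_1\ge2$, $\zeta(k_1,\ldots,k_n)=\sum_{m_1>\cdots>m_n>0}\prod m_j^{-k_j}$, $\zeta^\star(k_1,\ldots,k_n)=\sum_{m_1\ge\cdots\ge m_n>0}\prod m_j^{-k_j}$, $\zeta^t(k_1,\ldots,k_n)=\sum_{\mathbf p}t^{n-\mathrm{dep}(\mathbf p)}\zeta(\mathbf p)$ over sequences $\mathbf p$ obtained from $(k_1,\ldots,k_n)$ by replacing each separating comma by a comma or a plus sign ($\mathrm{dep}$ = length). *)

theory Defs
  imports "HOL-Analysis.Analysis" "HOL-Computational_Algebra.Polynomial"
begin

datatype letter = X | Y

type_synonym word = "letter list"

text \<open>An element of h_t is represented by its coefficient function on words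
  (all elements used below have finite support).\<close>
type_synonym elt = "word \<Rightarrow> rat poly"

definition supp :: "elt \<Rightarrow> word set" where
  "supp f = {w. f w \<noteq> 0}"

definition single :: "word \<Rightarrow> elt" where
  "single w = (\<lambda>v. if v = w then 1 else 0)"

definition tvar :: "rat poly" where
  "tvar = [:0, 1:]"

definition conc :: "elt \<Rightarrow> elt \<Rightarrow> elt" where
  "conc f g = (\<lambda>v. \<Sum>i\<le>length v. f (take i v) * g (drop i v))"

definition lin_ext :: "(word \<Rightarrow> elt) \<Rightarrow> elt \<Rightarrow> elt" where
  "lin_ext F f = (\<lambda>v. \<Sum>u\<in>supp f. f u * F u v)"

definition lin_ext2 :: "(word \<Rightarrow> word \<Rightarrow> elt) \<Rightarrow> elt \<Rightarrow> elt \<Rightarrow> elt" where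
  "lin_ext2 F f g = (\<lambda>v. \<Sum>u\<in>supp f. \<Sum>u'\<in>supp g. f u * g u' * F u u' v)"

definition zw :: "nat list \<Rightarrow> word" where
  "zw ks = concat (map (\<lambda>k. replicate (k - 1) X @ [Y]) ks)"

text \<open>Decoding a word of h^1 (empty or ending in y) into its index list.\<close>
primrec dec_aux :: "nat \<Rightarrow> word \<Rightarrow> nat list" where
  "dec_aux c [] = []"
| "dec_aux c (l # w) = (case l of X \<Rightarrow> dec_aux (Suc c) w | Y \<Rightarrow> Suc c # dec_aux 0 w)"

definition dec :: "word \<Rightarrow> nat list" where
  "dec w = dec_aux 0 w"

primrec sigma_w :: "rat poly \<Rightarrow> word \<Rightarrow> elt" where
  "sigma_w s [] = single []"
| "sigma_w s (l # w) = conc (case l of X \<Rightarrow> single [X]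
                                     | Y \<Rightarrow> (\<lambda>v. s * single [X] v + single [Y] v))
                              (sigma_w s w)"

definition S_w :: "rat poly \<Rightarrow> word \<Rightarrow> elt" where
  "S_w s w = (if w = [] then single [] else conc (sigma_w s (butlast w)) (single [last w]))"

definition S_map :: "rat poly \<Rightarrow> elt \<Rightarrow> elt" where
  "S_map s f = lin_ext (S_w s) f"

fun stuffle :: "nat list \<Rightarrow> nat list \<Rightarrow> nat list list" where
  "stuffle [] l = [l]"
| "stuffle k [] = [k]"
| "stuffle (a # u) (b # v) =
     map (Cons a) (stuffle u (b # v)) @ map (Cons b) (stuffle (a # u) v)
     @ map (Cons (a + b)) (stuffle u v)"

definition harm_w :: "word \<Rightarrow> word \<Rightarrow> elt" where
  "harm_w u v = (\<lambda>w. of_nat (count_list (map zw (stuffle (dec u) (dec v))) w))"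

definition harm :: "elt \<Rightarrow> elt \<Rightarrow> elt" where
  "harm f g = lin_ext2 harm_w f g"

definition compositions :: "nat \<Rightarrow> nat \<Rightarrow> nat list set" where
  "compositions k n = {ks. length ks = n \<and> (\<forall>x\<in>set ks. 1 \<le> x) \<and> sum_list ks = k}"

definition Nkn :: "nat \<Rightarrow> nat \<Rightarrow> nat \<Rightarrow> elt" where
  "Nkn a k n = (\<lambda>w. \<Sum>ks\<in>compositions k n. single (zw (map (\<lambda>x. a * x) ks)) w)"

definition mzv :: "nat list \<Rightarrow> real" where
  "mzv ks = (\<Sum>\<^sub>\<infinity> ms \<in> {ms. length ms = length ks \<and> sorted_wrt (>) ms \<and> (\<forall>m\<in>set ms. 0 < m)}.
              \<Prod>i<length ks. 1 / real (ms ! i) ^ (ks ! i))"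

definition mzsv :: "nat list \<Rightarrow> real" where
  "mzsv ks = (\<Sum>\<^sub>\<infinity> ms \<in> {ms. length ms = length ks \<and> sorted_wrt (\<ge>) ms \<and> (\<forall>m\<in>set ms. 0 < m)}.
              \<Prod>i<length ks. 1 / real (ms ! i) ^ (ks ! i))"

text \<open>All index lists obtained by replacing each separating comma by a comma or a plus.\<close>
fun merges :: "nat list \<Rightarrow> nat list list" where
  "merges [] = [[]]"
| "merges [k] = [[k]]"
| "merges (k # l # ks) = map (Cons k) (merges (l # ks)) @ merges ((k + l) # ks)"

definition zeta_t :: "real \<Rightarrow> nat list \<Rightarrow> real" where
  "zeta_t t ks = (\<Sum>p\<leftarrow>merges ks. t ^ (length ks - length p) * mzv p)"

end

theory Submission
  imports Defs
begin

text \<open>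
  For a composition q of k of length l write z_q for z_{a q_1} ... z_{a q_l}. For a composition c
  into n parts, S_t(z_c) is the sum of t^(n - |p|) z_p over all ways p of merging adjacent parts
  of c, so the coefficient of z_q in S_t(N_{k,n}) is t^(n-l) times the number C(k-l, n-l) of
  compositions into n parts that merge to q. On the other side S(z_a^j) is the sum of z_p over
  all compositions p of j, and z_q occurs C(l, k-j) times in their harmonic products with
  z_a^(k-j). The bracketed coefficients c_j are exactly those with
  sum_j c_j C(l, k-j) = C(k-l, n-l) t^(n-l), an alternating binomial inversion. Only a weight on
  compositions enters, so the same computation applies to multiple zeta values once zeta-star is
  written as a sum of zeta over merges and the harmonic product formula is known; both hold for
  truncated sums and pass to the limit.
\<close>

section \<open>Compositions\<close>

definition pos_list :: "nat list \<Rightarrow> bool" where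
  "pos_list q \<longleftrightarrow> (\<forall>x\<in>set q. 1 \<le> x)"

definition all_compositions :: "nat \<Rightarrow> nat list set" where
  "all_compositions k = {q. pos_list q \<and> sum_list q = k}"

lemma pos_list_simps [simp]:
  "pos_list []"
  "pos_list (x # q) \<longleftrightarrow> 1 \<le> x \<and> pos_list q"
  "pos_list (replicate j c) \<longleftrightarrow> j = 0 \<or> 1 \<le> c"
  by (auto simp: pos_list_def)

lemma pos_list_map_mult: "1 \<le> a \<Longrightarrow> pos_list q \<Longrightarrow> pos_list (map (\<lambda>x. a * x) q)"
  by (auto simp: pos_list_def)

lemma pos_list_length_le_sum_list: "pos_list q \<Longrightarrow> length q \<le> sum_list q"
  by (induction q) auto

lemma pos_list_eq_replicate_1:
  "pos_list q \<Longrightarrow> length q = sum_list q \<Longrightarrow> q = replicate (length q) 1"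
proof (induction q)
  case (Cons x q)
  then have "x = 1" "length q = sum_list q"
    using pos_list_length_le_sum_list[of q] by auto
  then show ?case using Cons by auto
qed simp

lemma finite_all_compositions: "finite (all_compositions k)"
proof (rule finite_subset)
  show "all_compositions k \<subseteq> {xs. set xs \<subseteq> {..k} \<and> length xs \<le> k}"
    using pos_list_length_le_sum_list member_le_sum_list by (fastforce simp: all_compositions_def)
qed (rule finite_lists_length_le, simp)

lemma all_compositions_0: "all_compositions 0 = {[]}"
proof -
  have "q = []" if "pos_list q" "sum_list q = 0" for q
    using pos_list_length_le_sum_list[OF that(1)] that(2) by simp
  then show ?thesis by (auto simp: all_compositions_def)
qed

lemma all_compositions_1: "all_compositions (Suc 0) = {[Suc 0]}"
proof -
  have "q = [Suc 0]" if "pos_list q" "sum_list q = Suc 0" for q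
    using that pos_list_length_le_sum_list[of q] by (cases q) auto
  then show ?thesis by (auto simp: all_compositions_def)
qed

lemma replicate_1_in_all_compositions: "replicate m 1 \<in> all_compositions m"
  by (simp add: all_compositions_def pos_list_def sum_list_replicate)

lemma compositions_eq_all_compositions:
  "compositions k n = {q \<in> all_compositions k. length q = n}"
  by (auto simp: compositions_def all_compositions_def pos_list_def)

lemma finite_compositions: "finite (compositions k n)"
  using finite_all_compositions by (simp add: compositions_eq_all_compositions)

lemma compositions_Suc_0: "compositions k (Suc 0) = (if 1 \<le> k then {[k]} else {})"
  by (auto simp: compositions_def length_Suc_conv)

lemma compositions_0_Suc: "compositions 0 (Suc n) = {}"
  by (auto simp: compositions_def length_Suc_conv)

lemma sum_Cons_image_Sigma:
  assumes "finite C" "\<And>c. c \<in> C \<Longrightarrow> finite (P c)"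
  shows "(\<Sum>q\<in>(\<lambda>(c, p). c # p) ` (SIGMA c:C. P c). h q) = (\<Sum>c\<in>C. \<Sum>p\<in>P c. h (c # p))"
proof -
  have "inj_on (\<lambda>(c, p). c # p) (SIGMA c:C. P c)" by (auto simp: inj_on_def)
  then show ?thesis
    by (simp only: sum.reindex) (subst sum.Sigma, auto simp: assms split_def)
qed

lemma sum_all_compositions_Suc:
  "(\<Sum>q\<in>all_compositions (Suc j). h q) = (\<Sum>c=1..Suc j. \<Sum>p\<in>all_compositions (Suc j - c). h (c # p))"
proof -
  have "all_compositions (Suc j) = (\<lambda>(c, p). c # p) ` (SIGMA c:{1..Suc j}. all_compositions (Suc j - c))"
  proof (intro set_eqI iffI)
    fix q assume q: "q \<in> all_compositions (Suc j)"
    then obtain c p where "q = c # p" by (cases q) (auto simp: all_compositions_def)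
    with q show "q \<in> (\<lambda>(c, p). c # p) ` (SIGMA c:{1..Suc j}. all_compositions (Suc j - c))"
      by (auto simp: all_compositions_def image_iff)
  qed (auto simp: all_compositions_def)
  then show ?thesis by (simp add: sum_Cons_image_Sigma finite_all_compositions)
qed

lemma sum_compositions_Suc:
  "(\<Sum>q\<in>compositions k (Suc n). h q) = (\<Sum>c=1..k. \<Sum>p\<in>compositions (k - c) n. h (c # p))"
proof -
  have "compositions k (Suc n) = (\<lambda>(c, p). c # p) ` (SIGMA c:{1..k}. compositions (k - c) n)"
  proof (intro set_eqI iffI)
    fix q assume q: "q \<in> compositions k (Suc n)"
    then obtain c p where "q = c # p" by (cases q) (auto simp: compositions_def)
    with q show "q \<in> (\<lambda>(c, p). c # p) ` (SIGMA c:{1..k}. compositions (k - c) n)"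
      by (auto simp: compositions_def image_iff)
  qed (auto simp: compositions_def)
  then show ?thesis by (simp add: sum_Cons_image_Sigma finite_compositions)
qed

section \<open>Merging adjacent parts\<close>

definition add_hd :: "nat \<Rightarrow> nat list \<Rightarrow> nat list" where
  "add_hd k p = (k + hd p) # tl p"

lemma merges_add_hd: "merges ((k + l) # ks) = map (add_hd k) (merges (l # ks))"
proof (induction ks arbitrary: l)
  case (Cons m ks)
  show ?case using Cons[of "l + m"] by (simp add: add_hd_def add.assoc)
qed (simp add: add_hd_def)

lemma merges_Cons_Cons:
  "merges (k # l # ks) = map (Cons k) (merges (l # ks)) @ map (add_hd k) (merges (l # ks))"
  using merges_add_hd[of k l ks] by simp

lemma sum_list_merges: "p \<in> set (merges ks) \<Longrightarrow> sum_list p = sum_list ks"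
  by (induction ks arbitrary: p rule: merges.induct) (auto simp: add.assoc)

lemma length_merges_le: "p \<in> set (merges ks) \<Longrightarrow> length p \<le> length ks"
  by (induction ks arbitrary: p rule: merges.induct) (auto intro: le_SucI)

lemma merges_eq_Nil_iff: "p \<in> set (merges ks) \<Longrightarrow> p = [] \<longleftrightarrow> ks = []"
  by (induction ks arbitrary: p rule: merges.induct) auto

lemma merges_lower_bound:
  "\<forall>k\<in>set ks. c \<le> k \<Longrightarrow> p \<in> set (merges ks) \<Longrightarrow> \<forall>x\<in>set p. c \<le> (x::nat)"
proof (induction ks arbitrary: p rule: merges.induct)
  case (3 k l ks)
  from 3(4) consider p' where "p = k # p'" "p' \<in> set (merges (l # ks))"
    | "p \<in> set (merges ((k + l) # ks))"
    by auto
  then show ?case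
  proof cases
    case 1
    then show ?thesis using 3(1)[of p'] 3(3) by auto
  next
    case 2
    then show ?thesis using 3(2)[of p] 3(3) by auto
  qed
qed auto

lemma pos_list_merges: "pos_list ks \<Longrightarrow> p \<in> set (merges ks) \<Longrightarrow> pos_list p"
  using merges_lower_bound[of ks 1 p] by (simp add: pos_list_def)

lemma merges_subset_all_compositions:
  "pos_list ks \<Longrightarrow> set (merges ks) \<subseteq> all_compositions (sum_list ks)"
  by (auto simp: all_compositions_def pos_list_merges sum_list_merges)

lemma sum_list_map_eq_sum_count_list:
  assumes "finite Q" "set xs \<subseteq> Q"
  shows "(\<Sum>x\<leftarrow>xs. f x) = (\<Sum>q\<in>Q. of_nat (count_list xs q) * (f q :: 'a :: semiring_1))"
  using assms(2)
proof (induction xs)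
  case (Cons x xs)
  have "(\<Sum>q\<in>Q. of_nat (count_list (x # xs) q) * f q)
      = (\<Sum>q\<in>Q. of_nat (count_list xs q) * f q) + (\<Sum>q\<in>Q. if x = q then f q else 0)"
    by (simp add: sum.distrib[symmetric]) (intro sum.cong refl, auto simp: algebra_simps)
  also have "(\<Sum>q\<in>Q. if x = q then f q else 0) = f x"
    using Cons.prems assms(1) by (simp add: sum.delta)
  finally show ?case using Cons by (simp add: add.commute)
qed simp

lemma count_map_Cons:
  "count_list (map (Cons c) M) q = (case q of [] \<Rightarrow> 0 | x # q' \<Rightarrow> if x = c then count_list M q' else 0)"
  by (induction M) (auto split: list.splits)

lemma count_map_add_hd:
  assumes "[] \<notin> set M"
  shows "count_list (map (add_hd c) M) q =
    (case q of [] \<Rightarrow> 0 | x # q' \<Rightarrow> if c \<le> x then count_list M ((x - c) # q') else 0)"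
  using assms
proof (induction M)
  case (Cons p M)
  then obtain y p' where "p = y # p'" by (cases p) auto
  with Cons show ?case by (auto simp: add_hd_def split: list.splits)
qed (simp split: list.splits)

lemma count_merges_Cons:
  assumes "cs \<noteq> []"
  shows "count_list (merges (c # cs)) q =
    (case q of [] \<Rightarrow> 0 | x # q' \<Rightarrow>
       (if x = c then count_list (merges cs) q' else 0)
     + (if c \<le> x then count_list (merges cs) ((x - c) # q') else 0))"
proof -
  obtain c2 cs' where cs: "cs = c2 # cs'" using assms by (cases cs) auto
  have "[] \<notin> set (merges cs)" using merges_eq_Nil_iff[of "[]" cs] assms by auto
  note nonempty = this[unfolded cs]
  show ?thesis
    unfolding cs merges_Cons_Cons count_list_append count_map_Cons count_map_add_hd[OF nonempty]
    by (simp split: list.splits)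
qed

lemma count_merges_Cons_0: "pos_list ks \<Longrightarrow> count_list (merges ks) (0 # q) = 0"
  using pos_list_merges[of ks "0 # q"] by (auto simp: count_list_0_iff)

text \<open>The coefficient of z_q in S_t(N_{k,n}), up to the power of t.\<close>
definition merge_count :: "nat \<Rightarrow> nat \<Rightarrow> nat list \<Rightarrow> nat" where
  "merge_count k n q = (\<Sum>c\<in>compositions k n. count_list (merges c) q)"

lemma merge_count_Suc_Cons:
  assumes "1 \<le> n" "1 \<le> x" "x \<le> k"
  shows "merge_count k (Suc n) (x # q) =
    merge_count (k - x) n q + (\<Sum>c=1..x-1. merge_count (k - c) n ((x - c) # q))"
proof -
  have nonempty: "c \<noteq> []" and pos: "pos_list c" if "c \<in> compositions m n" for c m
    using that assms(1) by (auto simp: compositions_def pos_list_def)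
  have "merge_count k (Suc n) (x # q) =
      (\<Sum>c=1..k. if x = c then merge_count (k - c) n q else 0)
    + (\<Sum>c=1..k. if c \<le> x then merge_count (k - c) n ((x - c) # q) else 0)"
    unfolding merge_count_def sum_compositions_Suc sum.distrib[symmetric]
    by (intro sum.cong refl) (simp add: count_merges_Cons nonempty sum.distrib)
  also have "(\<Sum>c=1..k. if x = c then merge_count (k - c) n q else 0) = merge_count (k - x) n q"
    using assms by simp
  also have "(\<Sum>c=1..k. if c \<le> x then merge_count (k - c) n ((x - c) # q) else 0)
      = (\<Sum>c=1..x. merge_count (k - c) n ((x - c) # q))"
    using assms by (intro sum.mono_neutral_cong_right) auto
  also have "\<dots> = (\<Sum>c=1..x-1. merge_count (k - c) n ((x - c) # q))"
  proof -
    have "{1..x} = insert x {1..x-1}" using assms by auto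
    moreover have "merge_count (k - x) n ((x - x) # q) = 0"
      by (simp add: merge_count_def count_merges_Cons_0 pos)
    ultimately show ?thesis by (simp add: sum.insert_if)
  qed
  finally show ?thesis .
qed

lemma choose_eq_sum_choose_pred:
  assumes "s \<le> d" "0 < e"
  shows "d choose e = ((d - s) choose e) + (\<Sum>c=1..s. (d - c) choose (e - 1))"
  using assms(1)
proof (induction s)
  case (Suc s)
  obtain e' where e: "e = Suc e'" using assms(2) by (cases e) auto
  have "d - s = Suc (d - Suc s)" using Suc.prems by simp
  then have "(d - s) choose e = ((d - Suc s) choose e) + ((d - Suc s) choose (e - 1))"
    unfolding e by simp
  with Suc show ?case by simp
qed simp

lemma choose_eq_sum_choose_pred_if:
  assumes "L \<le> S" "1 \<le> x"
  shows "(if L \<le> n then (S - L) choose (n - L) else 0)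
      + (\<Sum>c=1..x-1. if L + 1 \<le> n then (x + S - c - (L + 1)) choose (n - (L + 1)) else 0)
    = (if L \<le> n then (x + S - Suc L) choose (n - L) else 0)"
proof (cases "L < n")
  case True
  have "x + S - Suc L - (x - 1) = S - L" using assms by simp
  then have "(x + S - Suc L) choose (n - L)
      = ((S - L) choose (n - L)) + (\<Sum>c=1..x-1. (x + S - Suc L - c) choose (n - L - 1))"
    using choose_eq_sum_choose_pred[of "x - 1" "x + S - Suc L" "n - L"] assms True by simp
  with True show ?thesis by (simp add: add.commute)
qed auto

theorem merge_count_eq:
  assumes "1 \<le> n" "pos_list q"
  shows "merge_count (sum_list q) n q
    = (if length q \<le> n then (sum_list q - length q) choose (n - length q) else 0)"
  using assms
proof (induction n arbitrary: q rule: nat_induct_at_least)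
  case base
  then show ?case
    by (cases q rule: remdups_adj.cases) (auto simp: merge_count_def compositions_Suc_0)
next
  case (Suc n)
  show ?case
  proof (cases q)
    case Nil
    then show ?thesis by (simp add: merge_count_def compositions_0_Suc)
  next
    case (Cons x q')
    define L where "L = length q'"
    define S where "S = sum_list q'"
    have x: "1 \<le> x" and q': "pos_list q'" using Suc.prems Cons by auto
    have "L \<le> S" using pos_list_length_le_sum_list[OF q'] by (simp add: L_def S_def)
    have tail: "merge_count (x + S - c) n ((x - c) # q')
        = (if L + 1 \<le> n then (x + S - c - (L + 1)) choose (n - (L + 1)) else 0)"
      if "c \<in> {1..x-1}" for c
    proof -
      have eqs: "sum_list ((x - c) # q') = x + S - c" "length ((x - c) # q') = L + 1"
        using that by (auto simp: S_def L_def)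
      have "pos_list ((x - c) # q')" using that q' by auto
      from Suc.IH[OF this, unfolded eqs] show ?thesis by simp
    qed
    have "merge_count (sum_list q) (Suc n) q
        = (if L \<le> n then (S - L) choose (n - L) else 0)
        + (\<Sum>c=1..x-1. if L + 1 \<le> n then (x + S - c - (L + 1)) choose (n - (L + 1)) else 0)"
      using merge_count_Suc_Cons[OF Suc.hyps x, of "x + S" q'] Suc.IH[OF q'] tail
      by (simp add: Cons L_def S_def)
    also have "\<dots> = (if L \<le> n then (x + S - Suc L) choose (n - L) else 0)"
      by (rule choose_eq_sum_choose_pred_if[OF \<open>L \<le> S\<close> x])
    finally show ?thesis by (simp add: Cons L_def S_def)
  qed
qed

lemma count_merges_replicate_1:
  "count_list (merges (replicate j 1)) p = (if p \<in> all_compositions j then 1 else 0)"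
proof (induction j arbitrary: p)
  case 0
  then show ?case by (simp add: all_compositions_0)
next
  case (Suc j)
  show ?case
  proof (cases "j = 0")
    case True
    then show ?thesis by (simp add: all_compositions_1)
  next
    case False
    then have "replicate j (1::nat) \<noteq> []" by simp
    show ?thesis
    proof (cases p)
      case Nil
      then show ?thesis
        using merges_eq_Nil_iff[of "[]" "replicate (Suc j) 1"]
        by (auto simp: all_compositions_def count_list_0_iff)
    next
      case (Cons x p')
      show ?thesis
        unfolding replicate_Suc count_merges_Cons[OF \<open>replicate j 1 \<noteq> []\<close>] Cons Suc.IH
        by (cases x) (auto simp: all_compositions_def)
    qed
  qed
qed

lemma sum_list_merges_replicate_1:
  "(\<Sum>p\<leftarrow>merges (replicate j 1). f p) = (\<Sum>p\<in>all_compositions j. (f p :: 'a :: semiring_1))"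
proof -
  have "set (merges (replicate j 1)) \<subseteq> all_compositions j"
    using merges_subset_all_compositions[of "replicate j 1"] by (simp add: sum_list_replicate)
  then have "(\<Sum>p\<leftarrow>merges (replicate j 1). f p)
      = (\<Sum>p\<in>all_compositions j. of_nat (count_list (merges (replicate j 1)) p) * f p)"
    by (rule sum_list_map_eq_sum_count_list[OF finite_all_compositions])
  then show ?thesis
    by (simp only: count_merges_replicate_1) simp
qed

section \<open>Harmonic products with a word of ones\<close>

lemma stuffle_Nil2 [simp]: "stuffle p [] = [p]"
  by (cases p) auto

lemma sum_list_stuffle: "s \<in> set (stuffle u v) \<Longrightarrow> sum_list s = sum_list u + sum_list v"
  by (induction u v arbitrary: s rule: stuffle.induct) auto

lemma stuffle_eq_Nil_iff: "s \<in> set (stuffle u v) \<Longrightarrow> s = [] \<longleftrightarrow> u = [] \<and> v = []"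
  by (induction u v arbitrary: s rule: stuffle.induct) auto

lemma stuffle_lower_bound:
  "\<forall>k\<in>set u. c \<le> k \<Longrightarrow> \<forall>k\<in>set v. c \<le> k \<Longrightarrow> s \<in> set (stuffle u v) \<Longrightarrow> \<forall>x\<in>set s. c \<le> (x::nat)"
proof (induction u v arbitrary: s rule: stuffle.induct)
  case (3 a u b v)
  from 3(6) consider s' where "s = a # s'" "s' \<in> set (stuffle u (b # v))"
    | s' where "s = b # s'" "s' \<in> set (stuffle (a # u) v)"
    | s' where "s = (a + b) # s'" "s' \<in> set (stuffle u v)"
    by auto
  then show ?case
  proof cases
    case 1
    then show ?thesis using 3(1)[of s'] 3(4,5) by auto
  next
    case 2
    then show ?thesis using 3(2)[of s'] 3(4,5) by auto
  next
    case 3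
    then show ?thesis using "3.IH"(3)[of s'] "3.prems"(1,2) by auto
  qed
qed auto

lemma stuffle_subset_all_compositions:
  "pos_list u \<Longrightarrow> pos_list v \<Longrightarrow> set (stuffle u v) \<subseteq> all_compositions (sum_list u + sum_list v)"
  using stuffle_lower_bound[of u 1 v] sum_list_stuffle
  by (auto simp: all_compositions_def pos_list_def)

lemma count_stuffle_Nil: "count_list (stuffle u v) [] = (if u = [] \<and> v = [] then 1 else 0)"
  using stuffle_eq_Nil_iff[of "[]" u v] by (auto simp: count_list_0_iff)

lemma count_stuffle_Cons_Cons:
  "count_list (stuffle (a # u) (b # v)) (x # q) =
     (if a = x then count_list (stuffle u (b # v)) q else 0)
   + (if b = x then count_list (stuffle (a # u) v) q else 0)
   + (if a + b = x then count_list (stuffle u v) q else 0)"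
  by (simp add: count_map_Cons)

lemma choose_length_all_compositions:
  assumes "q \<in> all_compositions m"
  shows "length q choose m = (if q = replicate m 1 then 1 else 0)"
proof -
  have "pos_list q" "sum_list q = m" using assms by (auto simp: all_compositions_def)
  then have "length q \<le> m" using pos_list_length_le_sum_list by blast
  moreover have "length q = m \<longleftrightarrow> q = replicate m 1"
    using pos_list_eq_replicate_1[of q] \<open>pos_list q\<close> \<open>sum_list q = m\<close> by (metis length_replicate)
  ultimately show ?thesis by auto
qed

text \<open>The coefficient of z_q in S(z_1^j) * z_1^m.\<close>
definition stuffle_count :: "nat \<Rightarrow> nat \<Rightarrow> nat list \<Rightarrow> nat" where
  "stuffle_count j m q = (\<Sum>p\<in>all_compositions j. count_list (stuffle p (replicate m 1)) q)"

lemma stuffle_count_Nil: "stuffle_count j m [] = (if j = 0 \<and> m = 0 then 1 else 0)"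
proof -
  have "stuffle_count j m [] = (\<Sum>p\<in>all_compositions j. if p = [] \<and> m = 0 then 1 else 0)"
    unfolding stuffle_count_def by (intro sum.cong refl) (simp add: count_stuffle_Nil)
  also have "\<dots> = (if m = 0 \<and> [] \<in> all_compositions j then 1 else 0)"
    by (cases "m = 0") (simp_all add: sum.delta' finite_all_compositions)
  finally show ?thesis by (auto simp: all_compositions_def)
qed

lemma stuffle_count_0_left: "stuffle_count 0 m q = (if q = replicate m 1 then 1 else 0)"
  by (simp add: stuffle_count_def all_compositions_0)

lemma stuffle_count_0_right: "stuffle_count j 0 q = (if q \<in> all_compositions j then 1 else 0)"
proof -
  have "stuffle_count j 0 q = (\<Sum>p\<in>all_compositions j. if p = q then 1 else 0)"
    unfolding stuffle_count_def by (intro sum.cong refl) simp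
  then show ?thesis by (simp add: sum.delta finite_all_compositions)
qed

lemma stuffle_count_Suc_Suc_Cons:
  "stuffle_count (Suc j) (Suc m) (x # q) =
     (if 1 \<le> x \<and> x \<le> Suc j then stuffle_count (Suc j - x) (Suc m) q else 0)
   + (if x = 1 then stuffle_count (Suc j) m q else 0)
   + (if 2 \<le> x \<and> x \<le> Suc j + 1 then stuffle_count (Suc j + 1 - x) m q else 0)"
proof -
  have sum_if: "(\<Sum>x\<in>A. if P then f x else 0) = (if P then sum f A else 0)" for A P and f :: "_ \<Rightarrow> nat"
    by simp
  have "stuffle_count (Suc j) (Suc m) (x # q) = (\<Sum>c=1..Suc j. \<Sum>p\<in>all_compositions (Suc j - c).
        (if c = x then count_list (stuffle p (replicate (Suc m) 1)) q else 0)
      + (if 1 = x then count_list (stuffle (c # p) (replicate m 1)) q else 0)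
      + (if c + 1 = x then count_list (stuffle p (replicate m 1)) q else 0))"
    unfolding stuffle_count_def sum_all_compositions_Suc replicate_Suc count_stuffle_Cons_Cons
    by simp
  also have "\<dots> = (\<Sum>c=1..Suc j. if c = x then stuffle_count (Suc j - c) (Suc m) q else 0)
      + (if 1 = x then (\<Sum>c=1..Suc j. \<Sum>p\<in>all_compositions (Suc j - c).
          count_list (stuffle (c # p) (replicate m 1)) q) else 0)
      + (\<Sum>c=1..Suc j. if c + 1 = x then stuffle_count (Suc j - c) m q else 0)"
    unfolding stuffle_count_def by (simp only: sum.distrib sum_if)
  also have "(\<Sum>c=1..Suc j. \<Sum>p\<in>all_compositions (Suc j - c).
      count_list (stuffle (c # p) (replicate m 1)) q) = stuffle_count (Suc j) m q"
    unfolding stuffle_count_def sum_all_compositions_Suc ..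
  also have "(\<Sum>c=1..Suc j. if c + 1 = x then stuffle_count (Suc j - c) m q else 0)
      = (\<Sum>c=1..Suc j. if c = x - 1 \<and> 2 \<le> x then stuffle_count (Suc j + 1 - x) m q else 0)"
    by (intro sum.cong refl) auto
  finally show ?thesis
    by (cases "2 \<le> x") (auto simp: sum.delta')
qed

text \<open>Pascal's rule C(L+1, m+1) = C(L, m+1) + C(L, m); at x = 1 and x = j + 2 only one summand
  survives.\<close>
lemma pascal_with_boundary:
  fixes x j m L S :: nat
  assumes "P \<Longrightarrow> L \<le> S"
  shows "(if 1 \<le> x \<and> x \<le> Suc j then (if P \<and> S = Suc j - x + Suc m then L choose Suc m else 0) else 0)
    + (if x = 1 then (if P \<and> S = Suc j + m then L choose m else 0) else 0)
    + (if 2 \<le> x \<and> x \<le> Suc j + 1 then (if P \<and> S = Suc j + 1 - x + m then L choose m else 0) else 0)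
    = (if 1 \<le> x \<and> P \<and> x + S = Suc j + Suc m then Suc L choose Suc m else 0)"
proof (cases P)
  case True
  with assms have "L \<le> S" by blast
  consider "x = 0" | "x = 1" | "2 \<le> x" "x \<le> Suc j" | "x = j + 2" | "j + 2 < x" by linarith
  then show ?thesis
  proof cases
    case 4
    show ?thesis
    proof (cases "x + S = Suc j + Suc m")
      case True
      with 4 \<open>L \<le> S\<close> have "L choose Suc m = 0" by simp
      then have "Suc L choose Suc m = L choose m" by simp
      with 4 True \<open>P\<close> show ?thesis by simp
    qed (use 4 in simp)
  next
    case 5
    then have "x + S = Suc j + Suc m \<Longrightarrow> Suc L choose Suc m = 0"
      using \<open>L \<le> S\<close> by (simp del: binomial_Suc_Suc)
    with 5 show ?thesis by auto
  qed (use True in \<open>auto split: if_splits\<close>)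
qed simp

theorem stuffle_count_eq:
  "stuffle_count j m q = (if q \<in> all_compositions (j + m) then length q choose m else 0)"
proof (induction q arbitrary: j m)
  case Nil
  then show ?case by (auto simp: stuffle_count_Nil all_compositions_def)
next
  case (Cons x q)
  define L where "L = length q"
  define S where "S = sum_list q"
  have IH: "stuffle_count J M q = (if pos_list q \<and> S = J + M then L choose M else 0)" for J M
    using Cons.IH by (simp add: all_compositions_def L_def S_def)
  have "pos_list q \<Longrightarrow> L \<le> S" using pos_list_length_le_sum_list by (simp add: L_def S_def)
  note arith = pascal_with_boundary[of "pos_list q", OF this]
  consider "j = 0" | "m = 0" | j' m' where "j = Suc j'" "m = Suc m'"
    by (cases j; cases m) auto
  then show ?case
  proof cases
    case 1
    then show ?thesis
      using replicate_1_in_all_compositions[of m] choose_length_all_compositions[of "x # q" m]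
      by (auto simp: stuffle_count_0_left simp del: replicate.simps)
  next
    case 2
    then show ?thesis by (simp add: stuffle_count_0_right)
  next
    case 3
    have "stuffle_count j m (x # q)
        = (if 1 \<le> x \<and> pos_list q \<and> x + S = Suc j' + Suc m' then Suc L choose Suc m' else 0)"
      unfolding 3 stuffle_count_Suc_Suc_Cons IH by (rule arith)
    then show ?thesis using 3 by (simp add: all_compositions_def L_def S_def)
  qed
qed

section \<open>Binomial inversion\<close>

lemma choose_mult_choose:
  "(l choose (i + r)) * ((i + r) choose i) = (l choose i) * ((l - i) choose r)"
proof (cases "i + r \<le> l")
  case True
  then show ?thesis using choose_mult[of i "i + r" l] by (simp add: mult.commute)
next
  case False
  show ?thesis
  proof (cases "i \<le> l")
    case True
    with False have "l choose (i + r) = 0" "(l - i) choose r = 0" by simp_all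
    then show ?thesis by (simp only: mult_0 mult_0_right)
  next
    case False
    then have "l choose (i + r) = 0" "l choose i = 0" by simp_all
    then show ?thesis by (simp only: mult_0 mult_0_right)
  qed
qed

lemma alternating_sum_choose_mult_choose:
  assumes "i \<le> k" "l \<le> k"
  shows "(\<Sum>j\<le>k-i. (-1) ^ (k - i - j) * of_nat ((k - j) choose i) * of_nat (l choose (k - j)))
       = (if i = l then 1 else (0::'a::comm_ring_1))"
proof -
  have "(\<Sum>j\<le>k-i. (-1) ^ (k - i - j) * of_nat ((k - j) choose i) * of_nat (l choose (k - j)))
      = (\<Sum>r\<le>k-i. (-1) ^ r * of_nat ((l choose (i + r)) * ((i + r) choose i)) :: 'a)"
    by (rule sum.reindex_bij_witness[where i="\<lambda>r. k - i - r" and j="\<lambda>j. k - i - j"])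
       (use assms in \<open>auto simp: algebra_simps\<close>)
  also have "\<dots> = of_nat (l choose i) * (\<Sum>r\<le>k-i. (-1) ^ r * of_nat ((l - i) choose r))"
    unfolding choose_mult_choose of_nat_mult by (simp add: sum_distrib_left algebra_simps)
  also have "\<dots> = (if i = l then 1 else 0)"
  proof (cases "i \<le> l")
    case True
    have "(\<Sum>r\<le>k-i. (-1) ^ r * of_nat ((l - i) choose r) :: 'a)
        = (\<Sum>r\<le>l-i. (-1) ^ r * of_nat ((l - i) choose r))"
    proof (rule sum.mono_neutral_right)
      show "\<forall>r\<in>{..k-i} - {..l-i}. (-1) ^ r * of_nat ((l - i) choose r) = (0::'a)"
      proof
        fix r assume "r \<in> {..k-i} - {..l-i}"
        then have "(l - i) choose r = 0" by simp
        then show "(-1) ^ r * of_nat ((l - i) choose r) = (0::'a)" by (simp only: of_nat_0 mult_zero_right)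
      qed
    qed (use assms True in auto)
    with True show ?thesis using choose_alternating_sum[of "l - i", where 'a='a] by auto
  next
    case False
    then have "l choose i = 0" by simp
    with False show ?thesis by (simp del: binomial_eq_0_iff)
  qed
  finally show ?thesis .
qed

definition Nkn_coeff :: "'a::comm_ring_1 \<Rightarrow> nat \<Rightarrow> nat \<Rightarrow> nat \<Rightarrow> 'a" where
  "Nkn_coeff T k n j = (\<Sum>i=1..min n (k - j).
     (-1) ^ (k - i - j) * of_nat ((k - i) choose (k - n)) * of_nat ((k - j) choose i) * T ^ (n - i))"

lemma sum_triangle_swap:
  fixes n k :: nat
  assumes "n \<le> k"
  shows "(\<Sum>j<k. \<Sum>i=1..min n (k - j). f i j) = (\<Sum>i=1..n. \<Sum>j\<le>k-i. f i j)"
proof -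
  have "(\<Sum>i=1..min n (k - j). f i j) = (\<Sum>i=1..n. if i \<le> k - j then f i j else 0)" for j
  proof -
    have "{1..min n (k - j)} = {i \<in> {1..n}. i \<le> k - j}" by auto
    then show ?thesis by (simp only: sum.inter_filter[OF finite_atLeastAtMost])
  qed
  moreover have "(\<Sum>j\<le>k-i. f i j) = (\<Sum>j<k. if i \<le> k - j then f i j else 0)" if "i \<in> {1..n}" for i
  proof -
    have "{..k-i} = {j \<in> {..<k}. i \<le> k - j}" using that assms by auto
    then show ?thesis by (simp only: sum.inter_filter[OF finite_lessThan])
  qed
  ultimately show ?thesis by (simp add: sum.swap[of _ "{..<k}"])
qed

theorem sum_Nkn_coeff_mult_choose:
  assumes "l \<le> k" "n \<le> k"
  shows "(\<Sum>j<k. Nkn_coeff T k n j * of_nat (l choose (k - j)))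
       = (if 1 \<le> l \<and> l \<le> n then of_nat ((k - l) choose (n - l)) * T ^ (n - l) else 0)"
proof -
  have "(\<Sum>j<k. Nkn_coeff T k n j * of_nat (l choose (k - j)))
      = (\<Sum>i=1..n. \<Sum>j\<le>k-i. (-1) ^ (k - i - j) * of_nat ((k - i) choose (k - n))
          * of_nat ((k - j) choose i) * T ^ (n - i) * of_nat (l choose (k - j)))"
    unfolding Nkn_coeff_def sum_distrib_right by (rule sum_triangle_swap[OF assms(2)])
  also have "\<dots> = (\<Sum>i=1..n. of_nat ((k - i) choose (k - n)) * T ^ (n - i)
      * (\<Sum>j\<le>k-i. (-1) ^ (k - i - j) * of_nat ((k - j) choose i) * of_nat (l choose (k - j))))"
    by (simp add: sum_distrib_left algebra_simps)
  also have "\<dots> = (\<Sum>i=1..n. if i = l then of_nat ((k - i) choose (k - n)) * T ^ (n - i) else 0)"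
  proof (intro sum.cong refl)
    fix i assume "i \<in> {1..n}"
    then have "i \<le> k" using assms by simp
    from alternating_sum_choose_mult_choose[OF this assms(1), where 'a='a]
    show "of_nat ((k - i) choose (k - n)) * T ^ (n - i) * (\<Sum>j\<le>k-i. (-1) ^ (k - i - j)
        * of_nat ((k - j) choose i) * of_nat (l choose (k - j)))
      = (if i = l then of_nat ((k - i) choose (k - n)) * T ^ (n - i) else 0)"
      by simp
  qed
  also have "\<dots> = (if 1 \<le> l \<and> l \<le> n then of_nat ((k - l) choose (k - n)) * T ^ (n - l) else 0)"
    by (simp add: sum.delta')
  also have "\<dots> = (if 1 \<le> l \<and> l \<le> n then of_nat ((k - l) choose (n - l)) * T ^ (n - l) else 0)"
    using assms binomial_symmetric[of "k - n" "k - l"] by auto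
  finally show ?thesis .
qed

section \<open>The identity for an arbitrary weight on compositions\<close>

lemma sum_compositions_merges_eq_sum_all_compositions:
  assumes "1 \<le> n"
  shows "(\<Sum>c\<in>compositions k n. \<Sum>p\<leftarrow>merges c. T ^ (n - length p) * g p)
    = (\<Sum>q\<in>all_compositions k. (if length q \<le> n
        then of_nat ((k - length q) choose (n - length q)) * T ^ (n - length q) else 0) * g q)"
proof -
  have "(\<Sum>c\<in>compositions k n. \<Sum>p\<leftarrow>merges c. T ^ (n - length p) * g p)
      = (\<Sum>c\<in>compositions k n. \<Sum>q\<in>all_compositions k.
          of_nat (count_list (merges c) q) * (T ^ (n - length q) * g q))"
  proof (intro sum.cong refl sum_list_map_eq_sum_count_list finite_all_compositions)
    fix c assume "c \<in> compositions k n"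
    then show "set (merges c) \<subseteq> all_compositions k"
      using merges_subset_all_compositions[of c] by (auto simp: compositions_def pos_list_def)
  qed
  also have "\<dots> = (\<Sum>q\<in>all_compositions k. of_nat (merge_count k n q) * (T ^ (n - length q) * g q))"
    unfolding merge_count_def of_nat_sum sum_distrib_right by (rule sum.swap)
  also have "\<dots> = (\<Sum>q\<in>all_compositions k. (if length q \<le> n
        then of_nat ((k - length q) choose (n - length q)) * T ^ (n - length q) else 0) * g q)"
    using merge_count_eq[OF assms] by (intro sum.cong refl) (auto simp: all_compositions_def mult.assoc)
  finally show ?thesis .
qed

lemma sum_merges_stuffle_eq_sum_all_compositions:
  assumes "j \<le> k"
  shows "(\<Sum>p\<leftarrow>merges (replicate j 1). \<Sum>s\<leftarrow>stuffle p (replicate (k - j) 1). g s)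
    = (\<Sum>q\<in>all_compositions k. of_nat (length q choose (k - j)) * g q)"
proof -
  have "(\<Sum>p\<leftarrow>merges (replicate j 1). \<Sum>s\<leftarrow>stuffle p (replicate (k - j) 1). g s)
      = (\<Sum>p\<in>all_compositions j. \<Sum>q\<in>all_compositions k.
          of_nat (count_list (stuffle p (replicate (k - j) 1)) q) * g q)"
  proof (unfold sum_list_merges_replicate_1,
      intro sum.cong refl sum_list_map_eq_sum_count_list finite_all_compositions)
    fix p assume "p \<in> all_compositions j"
    then show "set (stuffle p (replicate (k - j) 1)) \<subseteq> all_compositions k"
      using stuffle_subset_all_compositions[of p "replicate (k - j) 1"] assms
      by (auto simp: all_compositions_def sum_list_replicate)
  qed
  also have "\<dots> = (\<Sum>q\<in>all_compositions k. of_nat (stuffle_count j (k - j) q) * g q)"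
    unfolding stuffle_count_def of_nat_sum sum_distrib_right by (rule sum.swap)
  also have "\<dots> = (\<Sum>q\<in>all_compositions k. of_nat (length q choose (k - j)) * g q)"
    using assms by (simp add: stuffle_count_eq)
  finally show ?thesis .
qed

theorem sum_compositions_merges_expansion:
  assumes "1 \<le> n" "n \<le> k"
  shows "(\<Sum>c\<in>compositions k n. \<Sum>p\<leftarrow>merges c. T ^ (n - length p) * g p)
    = (\<Sum>j<k. Nkn_coeff T k n j
        * (\<Sum>p\<leftarrow>merges (replicate j 1). \<Sum>s\<leftarrow>stuffle p (replicate (k - j) 1). g s))"
proof -
  have "(\<Sum>j<k. Nkn_coeff T k n j
        * (\<Sum>p\<leftarrow>merges (replicate j 1). \<Sum>s\<leftarrow>stuffle p (replicate (k - j) 1). g s))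
      = (\<Sum>j<k. \<Sum>q\<in>all_compositions k. Nkn_coeff T k n j * of_nat (length q choose (k - j)) * g q)"
  proof (intro sum.cong refl)
    fix j assume "j \<in> {..<k}"
    then show "Nkn_coeff T k n j
        * (\<Sum>p\<leftarrow>merges (replicate j 1). \<Sum>s\<leftarrow>stuffle p (replicate (k - j) 1). g s)
      = (\<Sum>q\<in>all_compositions k. Nkn_coeff T k n j * of_nat (length q choose (k - j)) * g q)"
      using sum_merges_stuffle_eq_sum_all_compositions[of j k g]
      by (simp add: sum_distrib_left mult.assoc)
  qed
  also have "\<dots> = (\<Sum>q\<in>all_compositions k. (\<Sum>j<k. Nkn_coeff T k n j * of_nat (length q choose (k - j))) * g q)"
    by (subst sum.swap) (simp add: sum_distrib_right)
  also have "\<dots> = (\<Sum>q\<in>all_compositions k. (if length q \<le> n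
        then of_nat ((k - length q) choose (n - length q)) * T ^ (n - length q) else 0) * g q)"
  proof (intro sum.cong refl arg_cong2[where f="(*)"])
    fix q assume q: "q \<in> all_compositions k"
    then have "q \<noteq> []" "length q \<le> k"
      using assms pos_list_length_le_sum_list by (auto simp: all_compositions_def)
    then have "1 \<le> length q" by (cases q) auto
    then show "(\<Sum>j<k. Nkn_coeff T k n j * of_nat (length q choose (k - j))) = (if length q \<le> n
        then of_nat ((k - length q) choose (n - length q)) * T ^ (n - length q) else 0)"
      using assms \<open>length q \<le> k\<close> by (simp add: sum_Nkn_coeff_mult_choose)
  qed
  finally show ?thesis
    using sum_compositions_merges_eq_sum_all_compositions[OF assms(1)] by simp
qed

section \<open>The operators S_s and the harmonic product\<close>

lemma lin_ext_sum:
  assumes "finite A"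
  shows "lin_ext F (\<lambda>w. \<Sum>x\<in>A. c x * single (h x) w) v = (\<Sum>x\<in>A. c x * F (h x) v)"
proof -
  define f where "f = (\<lambda>w. \<Sum>x\<in>A. c x * single (h x) w)"
  have "f u = 0" if "u \<notin> h ` A" for u
    using that by (auto simp: f_def single_def intro!: sum.neutral)
  then have "supp f \<subseteq> h ` A" by (auto simp: supp_def)
  then have "lin_ext F f v = (\<Sum>u\<in>h ` A. f u * F u v)"
    unfolding lin_ext_def by (intro sum.mono_neutral_left) (auto simp: assms supp_def)
  also have "\<dots> = (\<Sum>u\<in>h ` A. \<Sum>x\<in>A. c x * (if u = h x then F u v else 0))"
    unfolding f_def sum_distrib_right by (intro sum.cong refl) (simp add: single_def)
  also have "\<dots> = (\<Sum>x\<in>A. c x * F (h x) v)"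
    by (subst sum.swap) (simp add: sum_distrib_left[symmetric] sum.delta assms)
  finally show ?thesis unfolding f_def .
qed

lemma lin_ext_sum_list:
  "lin_ext F (\<lambda>w. \<Sum>p\<leftarrow>L. c p * single (h p) w) v = (\<Sum>p\<leftarrow>L. c p * F (h p) v)"
  using lin_ext_sum[of "{..<length L}" F "\<lambda>i. c (L ! i)" "\<lambda>i. h (L ! i)" v]
  by (simp add: sum_list_sum_nth atLeast0LessThan)

lemma lin_ext_single: "lin_ext F (single u) = F u"
proof -
  have "supp (single u) = {u}" by (auto simp: supp_def single_def)
  then show ?thesis by (auto simp: lin_ext_def single_def fun_eq_iff)
qed

lemma lin_ext2_eq_lin_ext: "lin_ext2 F f g = lin_ext (\<lambda>u. lin_ext (F u) g) f"
  by (simp add: lin_ext2_def lin_ext_def fun_eq_iff sum_distrib_left mult.assoc)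

definition lincomb :: "(rat poly \<times> word) list \<Rightarrow> elt" where
  "lincomb xs = (\<lambda>v. \<Sum>(c, u)\<leftarrow>xs. c * single u v)"

lemma lincomb_single: "single u = lincomb [(1, u)]"
  by (simp add: lincomb_def fun_eq_iff)

lemma lincomb_append: "lincomb (xs @ ys) = (\<lambda>v. lincomb xs v + lincomb ys v)"
  by (simp add: lincomb_def fun_eq_iff)

lemma lincomb_scale: "(\<lambda>v. a * lincomb xs v) = lincomb (map (\<lambda>(c, u). (a * c, u)) xs)"
  by (induction xs) (auto simp: lincomb_def fun_eq_iff algebra_simps)

lemma sum_list_map_mset_eq:
  "mset xs = mset ys \<Longrightarrow> (\<Sum>x\<leftarrow>xs. f x) = (\<Sum>y\<leftarrow>ys. (f y :: 'a :: comm_monoid_add))"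
  by (metis mset_map sum_mset_sum_list)

lemma lincomb_mset_eq: "mset xs = mset ys \<Longrightarrow> lincomb xs = lincomb ys"
  unfolding lincomb_def by (simp add: sum_list_map_mset_eq[of xs ys])

lemma conc_single_left: "conc (single u) f v = (if take (length u) v = u then f (drop (length u) v) else 0)"
proof (cases "take (length u) v = u")
  case True
  then have le: "length u \<le> length v" by (metis length_take min.absorb_iff1 min.commute)
  have "conc (single u) f v = (\<Sum>i\<in>{..length v}. if i = length u then f (drop i v) else 0)"
    unfolding conc_def
  proof (intro sum.cong refl)
    fix i assume "i \<in> {..length v}"
    then have "take i v = u \<longleftrightarrow> i = length u" using True by (metis length_take min.absorb_iff1 min.commute le atMost_iff)
    then show "single u (take i v) * f (drop i v) = (if i = length u then f (drop i v) else 0)"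
      by (simp add: single_def)
  qed
  also have "\<dots> = f (drop (length u) v)" using le by simp
  finally show ?thesis using True by simp
next
  case False
  have "take i v \<noteq> u" if "i \<le> length v" for i
  proof
    assume "take i v = u"
    then have "i = length u" using that by auto
    then show False using False \<open>take i v = u\<close> by simp
  qed
  then show ?thesis using False by (simp add: conc_def single_def)
qed

lemma conc_single_right: "conc f (single u) v =
  (if length u \<le> length v \<and> drop (length v - length u) v = u then f (take (length v - length u) v) else 0)"
proof (cases "length u \<le> length v \<and> drop (length v - length u) v = u")
  case True
  have "conc f (single u) v = (\<Sum>i\<in>{..length v}. if i = length v - length u then f (take i v) else 0)"
    unfolding conc_def
  proof (intro sum.cong refl)
    fix i assume i: "i \<in> {..length v}"
    have "drop i v = u \<longleftrightarrow> i = length v - length u"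
    proof
      assume "drop i v = u"
      then show "i = length v - length u" using i by auto
    qed (use True in auto)
    then show "f (take i v) * single u (drop i v) = (if i = length v - length u then f (take i v) else 0)"
      by (simp add: single_def)
  qed
  also have "\<dots> = f (take (length v - length u) v)" by simp
  finally show ?thesis using True by simp
next
  case False
  have "drop i v \<noteq> u" if "i \<le> length v" for i
  proof
    assume "drop i v = u"
    then have "length u = length v - i" by auto
    then show False using False \<open>drop i v = u\<close> that by auto
  qed
  then show ?thesis using False by (simp add: conc_def single_def)
qed

lemma eq_append_conv_take_drop: "v = u @ w \<longleftrightarrow> take (length u) v = u \<and> drop (length u) v = w"
  by (metis append_eq_conv_conj)

lemma conc_single_lincomb: "conc (single u) (lincomb xs) = lincomb (map (\<lambda>(c, w). (c, u @ w)) xs)"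
proof
  fix v
  show "conc (single u) (lincomb xs) v = lincomb (map (\<lambda>(c, w). (c, u @ w)) xs) v"
    unfolding conc_single_left lincomb_def
    by (induction xs) (auto simp: single_def eq_append_conv_take_drop)
qed

lemma sum_list_single_append:
  "(\<Sum>(c, w)\<leftarrow>xs. c * single (w @ u) v)
   = (if length u \<le> length v \<and> drop (length v - length u) v = u
      then (\<Sum>(c, w)\<leftarrow>xs. c * single w (take (length v - length u) v)) else 0)"
proof (induction xs)
  case (Cons a xs)
  obtain c w where a: "a = (c, w)" by (cases a)
  have "v = w @ u \<longleftrightarrow> length u \<le> length v \<and> drop (length v - length u) v = u
      \<and> take (length v - length u) v = w"
  proof
    assume "length u \<le> length v \<and> drop (length v - length u) v = u \<and> take (length v - length u) v = w"
    then show "v = w @ u" by (metis append_take_drop_id)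
  qed auto
  then show ?case using Cons by (auto simp: a single_def)
qed simp

lemma conc_lincomb_single: "conc (lincomb xs) (single u) = lincomb (map (\<lambda>(c, w). (c, w @ u)) xs)"
proof
  fix v
  show "conc (lincomb xs) (single u) v = lincomb (map (\<lambda>(c, w). (c, w @ u)) xs) v"
    unfolding conc_single_right lincomb_def
    by (simp add: sum_list_single_append[where u=u and v=v, unfolded split_def] split_def o_def)
qed

text \<open>Expanding sigma_s(w) as a list of weighted words lets it be compared termwise, as a
  multiset, with the list of merges.\<close>
primrec sigma_list :: "rat poly \<Rightarrow> word \<Rightarrow> (rat poly \<times> word) list" where
  "sigma_list s [] = [(1, [])]"
| "sigma_list s (l # w) = (case l of
      X \<Rightarrow> map (\<lambda>(c, u). (c, X # u)) (sigma_list s w)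
    | Y \<Rightarrow> map (\<lambda>(c, u). (s * c, X # u)) (sigma_list s w) @ map (\<lambda>(c, u). (c, Y # u)) (sigma_list s w))"

lemma conc_add_left: "conc (\<lambda>v. a * f v + g v) h = (\<lambda>v. a * conc f h v + conc g h v)"
  by (simp add: conc_def fun_eq_iff sum.distrib sum_distrib_left algebra_simps)

lemma sigma_w_eq_lincomb: "sigma_w s w = lincomb (sigma_list s w)"
proof (induction w)
  case Nil
  then show ?case by (simp add: lincomb_single)
next
  case (Cons l w)
  show ?case
  proof (cases l)
    case X
    then show ?thesis using Cons by (simp add: conc_single_lincomb)
  next
    case Y
    have "sigma_w s (Y # w) = (\<lambda>v. s * lincomb (map (\<lambda>(c, u). (c, [X] @ u)) (sigma_list s w)) v
                               + lincomb (map (\<lambda>(c, u). (c, [Y] @ u)) (sigma_list s w)) v)"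
      using Cons by (simp add: conc_add_left conc_single_lincomb)
    also have "\<dots> = lincomb (map (\<lambda>(c, u). (s * c, u)) (map (\<lambda>(c, u). (c, [X] @ u)) (sigma_list s w))
                      @ map (\<lambda>(c, u). (c, [Y] @ u)) (sigma_list s w))"
      unfolding lincomb_append lincomb_scale[symmetric] ..
    also have "map (\<lambda>(c, u). (s * c, u)) (map (\<lambda>(c, u). (c, [X] @ u)) (sigma_list s w))
        = map (\<lambda>(c, u). (s * c, X # u)) (sigma_list s w)"
      by (induction "sigma_list s w") auto
    finally show ?thesis using Y by simp
  qed
qed

lemma sigma_list_replicate_X:
  "sigma_list s (replicate r X @ w) = map (\<lambda>(c, u). (c, replicate r X @ u)) (sigma_list s w)"
proof (induction r)
  case 0
  then show ?case by (induction "sigma_list s w") auto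
next
  case (Suc r)
  then show ?case by (induction "sigma_list s w") auto
qed

lemma zw_Nil [simp]: "zw [] = []"
  by (simp add: zw_def)

lemma zw_Cons: "zw (k # ks) = replicate (k - 1) X @ Y # zw ks"
  by (simp add: zw_def)

lemma zw_eq_butlast_snoc: "ks \<noteq> [] \<Longrightarrow> zw ks = butlast (zw ks) @ [Y]"
proof (induction ks)
  case (Cons k ks)
  then show ?case by (cases ks) (auto simp: zw_Cons butlast_append)
qed simp

lemma butlast_zw_singleton: "butlast (zw [k]) = replicate (k - 1) X"
  by (simp add: zw_Cons butlast_append)

lemma butlast_zw_Cons_Cons:
  "butlast (zw (k # l # ks)) = replicate (k - 1) X @ Y # butlast (zw (l # ks))"
  by (simp add: zw_Cons[of k] zw_Cons[of l] butlast_append)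

lemma add_hd_merges:
  assumes "pos_list ks" "p \<in> set (merges ks)" "ks \<noteq> []"
  shows "zw (add_hd k p) = replicate k X @ zw p" "length (add_hd k p) = length p"
proof -
  have "p \<noteq> []" "pos_list p" using merges_eq_Nil_iff[OF assms(2)] pos_list_merges[OF assms(1,2)] assms(3) by auto
  then show "zw (add_hd k p) = replicate k X @ zw p" "length (add_hd k p) = length p"
    by (cases p; auto simp: add_hd_def zw_Cons replicate_add[symmetric])+
qed

lemma mset_sigma_list_butlast_zw:
  assumes "pos_list ks" "ks \<noteq> []"
  shows "mset (map (\<lambda>(c, u). (c, u @ [Y])) (sigma_list s (butlast (zw ks))))
       = mset (map (\<lambda>p. (s ^ (length ks - length p), zw p)) (merges ks))"
  using assms
proof (induction ks rule: induct_list012)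
  case (2 k)
  have "sigma_list s (replicate (k - 1) X @ []) = map (\<lambda>(c, u). (c, replicate (k - 1) X @ u)) (sigma_list s [])"
    by (rule sigma_list_replicate_X)
  then show ?case by (simp add: butlast_zw_singleton zw_Cons)
next
  case (3 k l ks)
  define M where "M = merges (l # ks)"
  define F where "F = (\<lambda>p. (s ^ (length (l # ks) - length p), zw p))"
  define F' where "F' = (\<lambda>p. (s ^ (length (k # l # ks) - length p), zw p))"
  define ap where "ap = (\<lambda>(c::rat poly, u::word). (c, u @ [Y]))"
  define G1 where "G1 = (\<lambda>(c::rat poly, v::word). (s * c, replicate k X @ v))"
  define G2 where "G2 = (\<lambda>(c::rat poly, v::word). (c, replicate (k - 1) X @ Y # v))"
  define S where "S = map ap (sigma_list s (butlast (zw (l # ks))))"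
  have IH: "mset S = mset (map F M)"
    using 3 by (simp add: S_def M_def F_def ap_def)
  obtain k' where k': "k = Suc k'" using 3 by (cases k) auto
  have mset_comp: "mset (map G S) = mset (map (G \<circ> F) M)" for G
    by (simp only: mset_map IH) (simp add: multiset.map_comp)
  have "map ap (sigma_list s (butlast (zw (k # l # ks)))) = map G1 S @ map G2 S"
    by (auto simp: butlast_zw_Cons_Cons sigma_list_replicate_X S_def G1_def G2_def ap_def k'
        replicate_append_same)
  then have "mset (map ap (sigma_list s (butlast (zw (k # l # ks)))))
      = mset (map G1 S) + mset (map G2 S)"
    by simp
  also have "\<dots> = mset (map (G1 \<circ> F) M) + mset (map (G2 \<circ> F) M)"
    by (simp only: mset_comp)
  also have "map (G1 \<circ> F) M = map F' (map (add_hd k) M)"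
  proof -
    have "(G1 \<circ> F) p = F' (add_hd k p)" if "p \<in> set M" for p
      using add_hd_merges[of "l # ks" p k] length_merges_le[of p "l # ks"] that "3.prems"
      by (simp add: M_def G1_def F_def F'_def Suc_diff_le)
    then show ?thesis by simp
  qed
  also have "map (G2 \<circ> F) M = map F' (map (Cons k) M)"
    by (simp add: G2_def F_def F'_def zw_Cons)
  finally show ?case
    unfolding M_def merges_Cons_Cons map_append mset_append ap_def F'_def by (simp add: add.commute)
qed simp

theorem S_w_zw:
  assumes "pos_list ks"
  shows "S_w s (zw ks) = (\<lambda>v. \<Sum>p\<leftarrow>merges ks. s ^ (length ks - length p) * single (zw p) v)"
proof (cases "ks = []")
  case False
  have "zw ks \<noteq> []" "last (zw ks) = Y"
    using zw_eq_butlast_snoc[OF False] by (metis snoc_eq_iff_butlast)+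
  then have "S_w s (zw ks) = conc (lincomb (sigma_list s (butlast (zw ks)))) (single [Y])"
    by (simp add: S_w_def sigma_w_eq_lincomb)
  also have "\<dots> = lincomb (map (\<lambda>(c, u). (c, u @ [Y])) (sigma_list s (butlast (zw ks))))"
    by (rule conc_lincomb_single)
  also have "\<dots> = lincomb (map (\<lambda>p. (s ^ (length ks - length p), zw p)) (merges ks))"
    by (rule lincomb_mset_eq[OF mset_sigma_list_butlast_zw[OF assms False]])
  finally show ?thesis by (simp add: lincomb_def o_def)
qed (simp add: S_w_def fun_eq_iff)

lemma dec_aux_replicate_X: "dec_aux c (replicate r X @ w) = dec_aux (c + r) w"
  by (induction r arbitrary: c) auto

lemma dec_zw: "pos_list ks \<Longrightarrow> dec (zw ks) = ks"
  by (induction ks) (simp_all add: dec_def zw_Cons dec_aux_replicate_X)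

lemma harm_w_zw:
  assumes "pos_list u" "pos_list v"
  shows "harm_w (zw u) (zw v) w = (\<Sum>s\<leftarrow>stuffle u v. single (zw s) w)"
proof -
  have "of_nat (count_list (map zw L) w) = (\<Sum>s\<leftarrow>L. single (zw s) w)" for L
    by (induction L) (auto simp: single_def)
  then show ?thesis by (simp add: harm_w_def dec_zw assms)
qed

lemma merges_map_mult: "merges (map (\<lambda>x. a * x) ks) = map (map (\<lambda>x. a * x)) (merges ks)"
  by (induction ks rule: merges.induct) (auto simp: distrib_left)

lemma stuffle_map_mult:
  "stuffle (map (\<lambda>x. a * x) u) (map (\<lambda>x. a * x) v) = map (map (\<lambda>x. a * x)) (stuffle u v)"
proof (induction u v rule: stuffle.induct)
  case (2 k)
  then show ?case by (cases k) auto
qed (simp_all add: distrib_left)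

lemma S_w_zw_map_mult:
  assumes "1 \<le> a" "pos_list ks"
  shows "S_w s (zw (map (\<lambda>x. a * x) ks))
    = (\<lambda>v. \<Sum>p\<leftarrow>merges ks. s ^ (length ks - length p) * single (zw (map (\<lambda>x. a * x) p)) v)"
  using S_w_zw[OF pos_list_map_mult[OF assms]] by (simp add: merges_map_mult o_def)

lemma S_map_Nkn:
  assumes "1 \<le> a"
  shows "S_map s (Nkn a k n) v = (\<Sum>ks\<in>compositions k n.
    \<Sum>p\<leftarrow>merges ks. s ^ (n - length p) * single (zw (map (\<lambda>x. a * x) p)) v)"
proof -
  have "S_map s (Nkn a k n) v = (\<Sum>ks\<in>compositions k n. 1 * S_w s (zw (map (\<lambda>x. a * x) ks)) v)"
    unfolding S_map_def Nkn_def
    using lin_ext_sum[OF finite_compositions, where F="S_w s" and c="\<lambda>_. 1"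
        and h="\<lambda>ks. zw (map (\<lambda>x. a * x) ks)"]
    by simp
  also have "\<dots> = (\<Sum>ks\<in>compositions k n.
      \<Sum>p\<leftarrow>merges ks. s ^ (n - length p) * single (zw (map (\<lambda>x. a * x) p)) v)"
    using assms by (intro sum.cong refl) (auto simp: compositions_def pos_list_def S_w_zw_map_mult)
  finally show ?thesis .
qed

lemma harm_S_map_replicate:
  assumes "1 \<le> a"
  shows "harm (S_map 1 (single (zw (replicate j a)))) (single (zw (replicate m a))) v
    = (\<Sum>p\<leftarrow>merges (replicate j 1). \<Sum>s\<leftarrow>stuffle p (replicate m 1). single (zw (map (\<lambda>x. a * x) s)) v)"
proof -
  have rep: "replicate i a = map (\<lambda>x. a * x) (replicate i 1)" for i
    by simp
  have "S_map 1 (single (zw (replicate j a))) = S_w 1 (zw (map (\<lambda>x. a * x) (replicate j 1)))"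
    by (simp add: S_map_def lin_ext_single)
  also have "\<dots> = (\<lambda>w. \<Sum>p\<leftarrow>merges (replicate j 1). 1 * single (zw (map (\<lambda>x. a * x) p)) w)"
    using S_w_zw_map_mult[OF assms, of "replicate j 1" 1] by simp
  finally have S_one: "S_map 1 (single (zw (replicate j a)))
      = (\<lambda>w. \<Sum>p\<leftarrow>merges (replicate j 1). 1 * single (zw (map (\<lambda>x. a * x) p)) w)" .
  have "harm (S_map 1 (single (zw (replicate j a)))) (single (zw (replicate m a))) v
      = (\<Sum>p\<leftarrow>merges (replicate j 1). 1 * harm_w (zw (map (\<lambda>x. a * x) p)) (zw (replicate m a)) v)"
    unfolding harm_def lin_ext2_eq_lin_ext lin_ext_single S_one by (rule lin_ext_sum_list)
  also have "\<dots> = (\<Sum>p\<leftarrow>merges (replicate j 1).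
      \<Sum>s\<leftarrow>stuffle p (replicate m 1). single (zw (map (\<lambda>x. a * x) s)) v)"
  proof (intro arg_cong[where f=sum_list] map_cong refl)
    fix p assume "p \<in> set (merges (replicate j 1))"
    then have "pos_list p" using pos_list_merges[of "replicate j 1"] by simp
    then show "1 * harm_w (zw (map (\<lambda>x. a * x) p)) (zw (replicate m a)) v
        = (\<Sum>s\<leftarrow>stuffle p (replicate m 1). single (zw (map (\<lambda>x. a * x) s)) v)"
      unfolding rep[of m] using assms
      by (simp add: harm_w_zw pos_list_map_mult stuffle_map_mult o_def del: map_replicate)
  qed
  finally show ?thesis .
qed

theorem S_map_Nkn_expansion:
  assumes "1 \<le> a" "1 \<le> n" "n \<le> k"
  shows "S_map s (Nkn a k n) = (\<lambda>w. \<Sum>j<k. Nkn_coeff s k n j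
    * harm (S_map 1 (single (zw (replicate j a)))) (single (zw (replicate (k - j) a))) w)"
proof
  fix v
  show "S_map s (Nkn a k n) v = (\<Sum>j<k. Nkn_coeff s k n j
      * harm (S_map 1 (single (zw (replicate j a)))) (single (zw (replicate (k - j) a))) v)"
    unfolding S_map_Nkn[OF assms(1)] harm_S_map_replicate[OF assms(1)]
    by (rule sum_compositions_merges_expansion[OF assms(2,3)])
qed

section \<open>Multiple zeta values\<close>

text \<open>zeta and zeta-star with all summation variables at most N; the recursion separates the
  terms with m_1 = N.\<close>
fun mzv_trunc :: "nat \<Rightarrow> nat list \<Rightarrow> real" where
  "mzv_trunc 0 ks = (if ks = [] then 1 else 0)"
| "mzv_trunc (Suc N) [] = 1"
| "mzv_trunc (Suc N) (k # ks) = mzv_trunc N (k # ks) + 1 / real (Suc N) ^ k * mzv_trunc N ks"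

fun mzsv_trunc :: "nat \<Rightarrow> nat list \<Rightarrow> real" where
  "mzsv_trunc 0 ks = (if ks = [] then 1 else 0)"
| "mzsv_trunc (Suc N) [] = 1"
| "mzsv_trunc (Suc N) (k # ks) = mzsv_trunc N (k # ks) + 1 / real (Suc N) ^ k * mzsv_trunc (Suc N) ks"

lemma mzv_trunc_Nil [simp]: "mzv_trunc N [] = 1"
  by (cases N) auto

lemma mzv_trunc_Suc_eq_power:
  "s \<noteq> [] \<Longrightarrow> mzv_trunc (Suc N) s = mzv_trunc N s + (1 / real (Suc N)) ^ hd s * mzv_trunc N (tl s)"
  by (cases s) (simp_all add: power_one_over)

lemma mzv_trunc_mult: "mzv_trunc N u * mzv_trunc N v = (\<Sum>s\<leftarrow>stuffle u v. mzv_trunc N s)"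
proof (induction N arbitrary: u v)
  case 0
  show ?case
  proof (cases "u = [] \<and> v = []")
    case False
    then have "(\<Sum>s\<leftarrow>stuffle u v. mzv_trunc 0 s) = (\<Sum>s\<leftarrow>stuffle u v. 0)"
      using stuffle_eq_Nil_iff by (intro arg_cong[where f=sum_list] map_cong) auto
    then show ?thesis using False by auto
  qed simp
next
  case (Suc N)
  show ?case
  proof (cases "u = [] \<or> v = []")
    case False
    then obtain a u' b v' where uv: "u = a # u'" "v = b # v'"
      by (cases u; cases v) auto
    define x where "x = 1 / real (Suc N)"
    have "(\<Sum>s\<leftarrow>stuffle u v. mzv_trunc (Suc N) s)
        = (\<Sum>s\<leftarrow>stuffle u v. mzv_trunc N s + x ^ hd s * mzv_trunc N (tl s))"
      using stuffle_eq_Nil_iff[of _ u v] uv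
      by (intro arg_cong[where f=sum_list] map_cong refl) (simp add: mzv_trunc_Suc_eq_power x_def)
    also have "\<dots> = mzv_trunc N u * mzv_trunc N v
        + x ^ a * (mzv_trunc N u' * mzv_trunc N v) + x ^ b * (mzv_trunc N u * mzv_trunc N v')
        + x ^ (a + b) * (mzv_trunc N u' * mzv_trunc N v')"
      by (simp add: uv sum_list_addf o_def sum_list_const_mult Suc.IH add.assoc)
    also have "\<dots> = mzv_trunc (Suc N) u * mzv_trunc (Suc N) v"
      by (simp add: uv x_def power_one_over algebra_simps power_add)
    finally show ?thesis ..
  qed auto
qed

lemma mzsv_trunc_eq_sum_merges: "mzsv_trunc N ks = (\<Sum>p\<leftarrow>merges ks. mzv_trunc N p)"
proof (induction N ks rule: mzsv_trunc.induct)
  case (1 ks)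
  show ?case
  proof (cases "ks = []")
    case False
    then have "(\<Sum>p\<leftarrow>merges ks. mzv_trunc 0 p) = (\<Sum>p\<leftarrow>merges ks. 0)"
      using merges_eq_Nil_iff by (intro arg_cong[where f=sum_list] map_cong) auto
    then show ?thesis using False by simp
  qed simp
next
  case (3 N k ks)
  define x where "x = 1 / real (Suc N)"
  show ?case
  proof (cases ks)
    case Nil
    then show ?thesis using "3.IH"(1) by (simp add: x_def)
  next
    case (Cons l ks')
    define M where "M = merges ks"
    have "[] \<notin> set M" using merges_eq_Nil_iff[of "[]" ks] Cons by (auto simp: M_def)
    have split: "merges (k # ks) = map (Cons k) M @ map (add_hd k) M"
      unfolding M_def Cons by (rule merges_Cons_Cons)
    have "(\<Sum>p\<leftarrow>merges (k # ks). mzv_trunc (Suc N) p)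
        = (\<Sum>p\<leftarrow>merges (k # ks). mzv_trunc N p + x ^ hd p * mzv_trunc N (tl p))"
      using merges_eq_Nil_iff[of _ "k # ks"]
      by (intro arg_cong[where f=sum_list] map_cong refl) (simp add: mzv_trunc_Suc_eq_power x_def)
    also have "\<dots> = mzsv_trunc N (k # ks) + (\<Sum>p\<leftarrow>merges (k # ks). x ^ hd p * mzv_trunc N (tl p))"
      by (simp add: "3.IH"(1) sum_list_addf)
    also have "(\<Sum>p\<leftarrow>merges (k # ks). x ^ hd p * mzv_trunc N (tl p))
        = x ^ k * (\<Sum>p\<leftarrow>M. mzv_trunc N p + x ^ hd p * mzv_trunc N (tl p))"
      unfolding split by (simp add: sum_list_addf o_def add_hd_def sum_list_const_mult power_add algebra_simps)
    also have "(\<Sum>p\<leftarrow>M. mzv_trunc N p + x ^ hd p * mzv_trunc N (tl p)) = mzsv_trunc (Suc N) ks"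
      unfolding "3.IH"(2) M_def[symmetric]
    proof (intro arg_cong[where f=sum_list] map_cong refl)
      fix p assume "p \<in> set M"
      with \<open>[] \<notin> set M\<close> have "p \<noteq> []" by auto
      then show "mzv_trunc N p + x ^ hd p * mzv_trunc N (tl p) = mzv_trunc (Suc N) p"
        by (simp add: mzv_trunc_Suc_eq_power x_def)
    qed
    finally show ?thesis by (simp add: x_def power_one_over)
  qed
qed simp

definition mzv_term :: "nat list \<Rightarrow> nat list \<Rightarrow> real" where
  "mzv_term ks ms = (\<Prod>i<length ks. 1 / real (ms ! i) ^ (ks ! i))"

definition dec_lists :: "(nat \<Rightarrow> nat \<Rightarrow> bool) \<Rightarrow> nat \<Rightarrow> nat \<Rightarrow> nat list set" where
  "dec_lists R N n = {ms. length ms = n \<and> sorted_wrt R ms \<and> (\<forall>m\<in>set ms. 0 < m) \<and> (\<forall>m\<in>set ms. m \<le> N)}"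

lemma mzv_term_Cons: "mzv_term (k # ks) (m # ms) = 1 / real m ^ k * mzv_term ks ms"
  by (simp only: mzv_term_def length_Cons prod.lessThan_Suc_shift) simp

lemma finite_dec_lists: "finite (dec_lists R N n)"
proof (rule finite_subset)
  show "dec_lists R N n \<subseteq> {xs. set xs \<subseteq> {..N} \<and> length xs \<le> n}"
    by (auto simp: dec_lists_def)
qed (rule finite_lists_length_le, simp)

lemma dec_lists_0: "dec_lists R N 0 = {[]}"
  by (auto simp: dec_lists_def)

lemma dec_lists_0_Suc: "dec_lists R 0 (Suc n) = {}"
  by (auto simp: dec_lists_def length_Suc_conv)

lemma dec_lists_mono: "N \<le> N' \<Longrightarrow> dec_lists R N n \<subseteq> dec_lists R N' n"
  by (auto simp: dec_lists_def)

lemma dec_lists_less_Suc: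
  "dec_lists (>) (Suc N) (Suc n) = dec_lists (>) N (Suc n) \<union> Cons (Suc N) ` dec_lists (>) N n"
proof (intro set_eqI iffI)
  fix ms assume "ms \<in> dec_lists (>) (Suc N) (Suc n)"
  then obtain m ms' where "ms = m # ms'" "ms' \<in> dec_lists (>) (Suc N) n" "\<forall>y\<in>set ms'. y < m"
      "0 < m" "m \<le> Suc N"
    by (auto simp: dec_lists_def length_Suc_conv)
  then show "ms \<in> dec_lists (>) N (Suc n) \<union> Cons (Suc N) ` dec_lists (>) N n"
    by (cases "m = Suc N") (fastforce simp: dec_lists_def)+
qed (auto simp: dec_lists_def less_Suc_eq_le intro: le_SucI)

lemma dec_lists_le_Suc:
  "dec_lists (\<ge>) (Suc N) (Suc n) = dec_lists (\<ge>) N (Suc n) \<union> Cons (Suc N) ` dec_lists (\<ge>) (Suc N) n"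
proof (intro set_eqI iffI)
  fix ms assume "ms \<in> dec_lists (\<ge>) (Suc N) (Suc n)"
  then obtain m ms' where "ms = m # ms'" "ms' \<in> dec_lists (\<ge>) (Suc N) n" "\<forall>y\<in>set ms'. y \<le> m"
      "0 < m" "m \<le> Suc N"
    by (auto simp: dec_lists_def length_Suc_conv)
  then show "ms \<in> dec_lists (\<ge>) N (Suc n) \<union> Cons (Suc N) ` dec_lists (\<ge>) (Suc N) n"
    by (cases "m = Suc N") (fastforce simp: dec_lists_def)+
qed (auto simp: dec_lists_def intro: le_SucI)

lemma sum_mzv_term_Cons_image:
  "sum (mzv_term (k # ks)) (Cons m ` A) = 1 / real m ^ k * sum (mzv_term ks) A"
  by (subst sum.reindex) (auto simp: inj_on_def mzv_term_Cons sum_distrib_left)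

lemma mzv_trunc_eq_sum: "mzv_trunc N ks = sum (mzv_term ks) (dec_lists (>) N (length ks))"
proof (induction N ks rule: mzv_trunc.induct)
  case (3 N k ks)
  have "sum (mzv_term (k # ks)) (dec_lists (>) (Suc N) (Suc (length ks)))
      = sum (mzv_term (k # ks)) (dec_lists (>) N (Suc (length ks)))
      + sum (mzv_term (k # ks)) (Cons (Suc N) ` dec_lists (>) N (length ks))"
    unfolding dec_lists_less_Suc
    by (intro sum.union_disjoint finite_dec_lists finite_imageI) (auto simp: dec_lists_def)
  with 3 show ?case by (simp add: sum_mzv_term_Cons_image)
next
  case (1 ks)
  then show ?case by (cases ks) (auto simp: dec_lists_0 dec_lists_0_Suc mzv_term_def)
qed (simp add: dec_lists_0 mzv_term_def)

lemma mzsv_trunc_eq_sum: "mzsv_trunc N ks = sum (mzv_term ks) (dec_lists (\<ge>) N (length ks))"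
proof (induction N ks rule: mzsv_trunc.induct)
  case (3 N k ks)
  have "sum (mzv_term (k # ks)) (dec_lists (\<ge>) (Suc N) (Suc (length ks)))
      = sum (mzv_term (k # ks)) (dec_lists (\<ge>) N (Suc (length ks)))
      + sum (mzv_term (k # ks)) (Cons (Suc N) ` dec_lists (\<ge>) (Suc N) (length ks))"
    unfolding dec_lists_le_Suc
    by (intro sum.union_disjoint finite_dec_lists finite_imageI) (auto simp: dec_lists_def)
  with 3 show ?case by (simp add: sum_mzv_term_Cons_image)
next
  case (1 ks)
  then show ?case by (cases ks) (auto simp: dec_lists_0 dec_lists_0_Suc mzv_term_def)
qed (simp add: dec_lists_0 mzv_term_def)

lemma finite_subset_incseq_Union:
  assumes "incseq B" "finite F" "F \<subseteq> (\<Union>N. B N)"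
  shows "\<exists>N. F \<subseteq> B N"
  using assms(2,3)
proof (induction F rule: finite_induct)
  case (insert x F)
  then obtain N1 N2 where "F \<subseteq> B N1" "x \<in> B N2" by blast
  then have "insert x F \<subseteq> B (max N1 N2)"
    using incseqD[OF assms(1), of N1 "max N1 N2"] incseqD[OF assms(1), of N2 "max N1 N2"] by auto
  then show ?case by blast
qed simp

lemma tendsto_sum_incseq_infsum:
  fixes f :: "'a \<Rightarrow> real"
  assumes nonneg: "\<And>x. x \<in> A \<Longrightarrow> 0 \<le> f x" and inc: "incseq B" and fin: "\<And>N. finite (B N)"
    and A: "A = (\<Union>N. B N)" and bdd: "\<And>N. sum f (B N) \<le> C"
  shows "(\<lambda>N. sum f (B N)) \<longlonglongrightarrow> infsum f A"
proof -
  have sub: "B N \<subseteq> A" for N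
    unfolding A by blast
  have "f summable_on A"
  proof (rule nonneg_bdd_above_summable_on)
    show "bdd_above (sum f ` {F. F \<subseteq> A \<and> finite F})"
    proof (rule bdd_aboveI2)
      fix F assume "F \<in> {F. F \<subseteq> A \<and> finite F}"
      then have "finite F" "F \<subseteq> (\<Union>N. B N)" unfolding A by auto
      then obtain N where "F \<subseteq> B N" using finite_subset_incseq_Union[OF inc] by blast
      then have "sum f F \<le> sum f (B N)"
        by (rule sum_mono2[OF fin]) (use sub nonneg in blast)
      also have "\<dots> \<le> C" by (rule bdd)
      finally show "sum f F \<le> C" .
    qed
  qed (rule nonneg)
  then have lim: "(sum f \<longlongrightarrow> infsum f A) (finite_subsets_at_top A)"
    by (rule infsum_tendsto)
  have "filterlim B (finite_subsets_at_top A) sequentially"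
    unfolding filterlim_def le_filter_def eventually_filtermap
  proof (intro allI impI)
    fix P assume "eventually P (finite_subsets_at_top A)"
    then obtain X where X: "finite X" "X \<subseteq> A" "\<forall>Y. finite Y \<and> X \<subseteq> Y \<and> Y \<subseteq> A \<longrightarrow> P Y"
      by (auto simp only: eventually_finite_subsets_at_top)
    have "X \<subseteq> (\<Union>N. B N)" using X(2) unfolding A .
    then obtain N0 where N0: "X \<subseteq> B N0" using finite_subset_incseq_Union[OF inc X(1)] by blast
    show "eventually (\<lambda>N. P (B N)) sequentially"
      unfolding eventually_sequentially
    proof (intro exI allI impI)
      fix N assume "N0 \<le> N"
      then have "X \<subseteq> B N" using N0 incseqD[OF inc] by blast
      then show "P (B N)" using X(3) fin sub by blast
    qed
  qed
  from filterlim_compose[OF lim this] show ?thesis by simp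
qed

lemma mzv_term_nonneg: "0 \<le> mzv_term ks ms"
  by (simp add: mzv_term_def prod_nonneg)

lemma tendsto_sum_dec_lists:
  assumes "\<And>N. sum (mzv_term ks) (dec_lists R N (length ks)) \<le> C"
  shows "(\<lambda>N. sum (mzv_term ks) (dec_lists R N (length ks)))
    \<longlonglongrightarrow> (\<Sum>\<^sub>\<infinity>ms\<in>{ms. length ms = length ks \<and> sorted_wrt R ms \<and> (\<forall>m\<in>set ms. 0 < m)}. mzv_term ks ms)"
proof (rule tendsto_sum_incseq_infsum[OF mzv_term_nonneg _ finite_dec_lists _ assms])
  show "incseq (\<lambda>N. dec_lists R N (length ks))"
    by (rule monoI) (rule dec_lists_mono)
  show "{ms. length ms = length ks \<and> sorted_wrt R ms \<and> (\<forall>m\<in>set ms. 0 < m)}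
      = (\<Union>N. dec_lists R N (length ks))"
    by (auto simp: dec_lists_def intro!: exI[of _ "sum_list _"] member_le_sum_list)
qed

lemma mzv_trunc_nonneg: "0 \<le> mzv_trunc N ks"
  by (simp add: mzv_trunc_eq_sum sum_nonneg mzv_term_nonneg)

lemma mzv_trunc_mono: "mzv_trunc N ks \<le> mzv_trunc (Suc N) ks"
  by (cases ks) (simp_all add: mzv_trunc_nonneg)

lemma mzv_trunc_Cons_le: "mzv_trunc N (k # ks) \<le> (\<Sum>m=1..N. 1 / real m ^ k) * mzv_trunc N ks"
proof (induction N)
  case (Suc N)
  have "mzv_trunc (Suc N) (k # ks) = mzv_trunc N (k # ks) + 1 / real (Suc N) ^ k * mzv_trunc N ks"
    by simp
  also have "\<dots> \<le> ((\<Sum>m=1..N. 1 / real m ^ k) + 1 / real (Suc N) ^ k) * mzv_trunc N ks"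
    using Suc by (simp add: algebra_simps)
  also have "\<dots> \<le> (\<Sum>m=1..Suc N. 1 / real m ^ k) * mzv_trunc (Suc N) ks"
    by (simp add: mult_left_mono mzv_trunc_mono sum_nonneg)
  finally show ?case .
qed simp

lemma sum_inverse_power_le_suminf:
  assumes "2 \<le> k"
  shows "(\<Sum>m=1..N. 1 / real m ^ k) \<le> (\<Sum>m. inverse (real m ^ 2))"
proof -
  have "(\<Sum>m=1..N. 1 / real m ^ k) \<le> (\<Sum>m=1..N. inverse (real m ^ 2))"
  proof (rule sum_mono)
    fix m :: nat assume "m \<in> {1..N}"
    then have "real m ^ 2 \<le> real m ^ k" by (intro power_increasing assms) auto
    with \<open>m \<in> {1..N}\<close> show "1 / real m ^ k \<le> inverse (real m ^ 2)"
      by (simp add: inverse_eq_divide frac_le)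
  qed
  also have "\<dots> \<le> (\<Sum>m. inverse (real m ^ 2))"
    by (rule sum_le_suminf[OF inverse_power_summable]) auto
  finally show ?thesis .
qed

lemma mzv_trunc_le:
  assumes "\<forall>k\<in>set ks. 2 \<le> k"
  shows "mzv_trunc N ks \<le> (\<Sum>m. inverse (real m ^ 2)) ^ length ks"
  using assms
proof (induction ks)
  case (Cons k ks)
  have "mzv_trunc N (k # ks) \<le> (\<Sum>m=1..N. 1 / real m ^ k) * mzv_trunc N ks"
    by (rule mzv_trunc_Cons_le)
  also have "\<dots> \<le> (\<Sum>m. inverse (real m ^ 2)) * (\<Sum>m. inverse (real m ^ 2)) ^ length ks"
  proof (rule mult_mono)
    show "0 \<le> (\<Sum>m. inverse (real m ^ 2))"
      by (rule suminf_nonneg[OF inverse_power_summable]) auto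
  qed (use Cons sum_inverse_power_le_suminf[of k N] mzv_trunc_nonneg in auto)
  finally show ?case by simp
qed simp

lemma mzv_trunc_tendsto:
  assumes "\<forall>k\<in>set ks. 2 \<le> k"
  shows "(\<lambda>N. mzv_trunc N ks) \<longlonglongrightarrow> mzv ks"
proof -
  have "(\<lambda>N. sum (mzv_term ks) (dec_lists (>) N (length ks))) \<longlonglongrightarrow>
      (\<Sum>\<^sub>\<infinity>ms\<in>{ms. length ms = length ks \<and> sorted_wrt (>) ms \<and> (\<forall>m\<in>set ms. 0 < m)}. mzv_term ks ms)"
    by (rule tendsto_sum_dec_lists) (use mzv_trunc_le[OF assms] in \<open>simp add: mzv_trunc_eq_sum\<close>)
  then show ?thesis by (simp add: mzv_trunc_eq_sum mzv_def mzv_term_def)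
qed

lemma mzsv_trunc_tendsto:
  assumes "\<forall>k\<in>set ks. 2 \<le> k"
  shows "(\<lambda>N. mzsv_trunc N ks) \<longlonglongrightarrow> mzsv ks"
proof -
  have "mzsv_trunc N ks \<le> (\<Sum>p\<leftarrow>merges ks. (\<Sum>m. inverse (real m ^ 2)) ^ length p)" for N
    unfolding mzsv_trunc_eq_sum_merges
    by (rule sum_list_mono) (use mzv_trunc_le merges_lower_bound[OF assms] in blast)
  then have "(\<lambda>N. sum (mzv_term ks) (dec_lists (\<ge>) N (length ks))) \<longlonglongrightarrow>
      (\<Sum>\<^sub>\<infinity>ms\<in>{ms. length ms = length ks \<and> sorted_wrt (\<ge>) ms \<and> (\<forall>m\<in>set ms. 0 < m)}. mzv_term ks ms)"
    by (intro tendsto_sum_dec_lists) (simp add: mzsv_trunc_eq_sum)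
  then show ?thesis by (simp add: mzsv_trunc_eq_sum mzsv_def mzv_term_def)
qed

lemma tendsto_sum_list:
  "(\<And>x. x \<in> set L \<Longrightarrow> (\<lambda>N. f N x) \<longlonglongrightarrow> l x) \<Longrightarrow> (\<lambda>N. \<Sum>x\<leftarrow>L. f N x :: real) \<longlonglongrightarrow> (\<Sum>x\<leftarrow>L. l x)"
  by (induction L) (auto intro!: tendsto_add)

theorem mzv_mult_eq_sum_stuffle:
  assumes "\<forall>k\<in>set u. 2 \<le> k" "\<forall>k\<in>set v. 2 \<le> k"
  shows "mzv u * mzv v = (\<Sum>s\<leftarrow>stuffle u v. mzv s)"
proof (rule LIMSEQ_unique)
  show "(\<lambda>N. mzv_trunc N u * mzv_trunc N v) \<longlonglongrightarrow> mzv u * mzv v"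
    by (intro tendsto_mult mzv_trunc_tendsto assms)
  have "(\<lambda>N. \<Sum>s\<leftarrow>stuffle u v. mzv_trunc N s) \<longlonglongrightarrow> (\<Sum>s\<leftarrow>stuffle u v. mzv s)"
    by (intro tendsto_sum_list mzv_trunc_tendsto) (use stuffle_lower_bound[OF assms] in blast)
  then show "(\<lambda>N. mzv_trunc N u * mzv_trunc N v) \<longlonglongrightarrow> (\<Sum>s\<leftarrow>stuffle u v. mzv s)"
    by (simp add: mzv_trunc_mult)
qed

theorem mzsv_eq_sum_merges:
  assumes "\<forall>k\<in>set ks. 2 \<le> k"
  shows "mzsv ks = (\<Sum>p\<leftarrow>merges ks. mzv p)"
proof (rule LIMSEQ_unique)
  show "(\<lambda>N. mzsv_trunc N ks) \<longlonglongrightarrow> mzsv ks"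
    by (rule mzsv_trunc_tendsto[OF assms])
  have "(\<lambda>N. \<Sum>p\<leftarrow>merges ks. mzv_trunc N p) \<longlonglongrightarrow> (\<Sum>p\<leftarrow>merges ks. mzv p)"
    by (intro tendsto_sum_list mzv_trunc_tendsto) (use merges_lower_bound[OF assms] in blast)
  then show "(\<lambda>N. mzsv_trunc N ks) \<longlonglongrightarrow> (\<Sum>p\<leftarrow>merges ks. mzv p)"
    by (simp add: mzsv_trunc_eq_sum_merges)
qed

lemma mzsv_mult_mzv_replicate:
  assumes "2 \<le> a"
  shows "mzsv (replicate j a) * mzv (replicate m a)
    = (\<Sum>p\<leftarrow>merges (replicate j 1). \<Sum>s\<leftarrow>stuffle p (replicate m 1). mzv (map (\<lambda>x. a * x) s))"
proof -
  have "2 \<le> a * x" if "1 \<le> x" for x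
  proof -
    have "a * 1 \<le> a * x" using that by (rule mult_le_mono2)
    with assms show ?thesis by linarith
  qed
  then have ge2: "\<forall>x\<in>set (map (\<lambda>x. a * x) p). 2 \<le> x" if "pos_list p" for p
    using that by (auto simp: pos_list_def)
  have "mzsv (replicate j a) = (\<Sum>p\<leftarrow>merges (replicate j a). mzv p)"
    using assms by (intro mzsv_eq_sum_merges) simp
  also have "\<dots> = (\<Sum>p\<leftarrow>merges (replicate j 1). mzv (map (\<lambda>x. a * x) p))"
    using merges_map_mult[of a "replicate j 1"] by (simp add: o_def)
  finally have "mzsv (replicate j a) * mzv (replicate m a)
      = (\<Sum>p\<leftarrow>merges (replicate j 1). mzv (map (\<lambda>x. a * x) p) * mzv (replicate m a))"
    by (simp add: sum_list_mult_const)
  also have "\<dots> = (\<Sum>p\<leftarrow>merges (replicate j 1).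
      \<Sum>s\<leftarrow>stuffle p (replicate m 1). mzv (map (\<lambda>x. a * x) s))"
  proof (intro arg_cong[where f=sum_list] map_cong refl)
    fix p assume "p \<in> set (merges (replicate j 1))"
    then have "pos_list p" using pos_list_merges[of "replicate j 1"] by simp
    from mzv_mult_eq_sum_stuffle[OF ge2[OF this] ge2[of "replicate m 1"], unfolded stuffle_map_mult]
    show "mzv (map (\<lambda>x. a * x) p) * mzv (replicate m a)
        = (\<Sum>s\<leftarrow>stuffle p (replicate m 1). mzv (map (\<lambda>x. a * x) s))"
      by (simp add: o_def)
  qed
  finally show ?thesis .
qed

theorem sum_zeta_t_expansion:
  assumes "1 < a" "1 \<le> n" "n \<le> k"
  shows "(\<Sum>ks\<in>compositions k n. zeta_t t (map (\<lambda>x. a * x) ks))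
    = (\<Sum>j<k. Nkn_coeff t k n j * mzsv (replicate j a) * mzv (replicate (k - j) a))"
proof -
  have "(\<Sum>ks\<in>compositions k n. zeta_t t (map (\<lambda>x. a * x) ks))
      = (\<Sum>ks\<in>compositions k n. \<Sum>p\<leftarrow>merges ks. t ^ (n - length p) * mzv (map (\<lambda>x. a * x) p))"
    by (intro sum.cong refl) (simp add: compositions_def zeta_t_def merges_map_mult o_def)
  also have "\<dots> = (\<Sum>j<k. Nkn_coeff t k n j * (\<Sum>p\<leftarrow>merges (replicate j 1).
      \<Sum>s\<leftarrow>stuffle p (replicate (k - j) 1). mzv (map (\<lambda>x. a * x) s)))"
    by (rule sum_compositions_merges_expansion[OF assms(2,3)])
  also have "\<dots> = (\<Sum>j<k. Nkn_coeff t k n j * mzsv (replicate j a) * mzv (replicate (k - j) a))"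
    using assms(1) by (simp add: mzsv_mult_mzv_replicate mult.assoc)
  finally show ?thesis .
qed

theorem corollary4p11:
  fixes a k n :: nat
  assumes "1 \<le> a" and "1 \<le> n" and "n \<le> k"
  shows "S_map tvar (Nkn a k n)
           = (\<lambda>w. \<Sum>j<k. (\<Sum>i=1..min n (k - j).
                 (-1) ^ (k - i - j) * of_nat ((k - i) choose (k - n)) * of_nat ((k - j) choose i)
                 * tvar ^ (n - i))
               * harm (S_map 1 (single (zw (replicate j a)))) (single (zw (replicate (k - j) a))) w)
       \<and> (1 < a \<longrightarrow> (\<forall>t::real.
           (\<Sum>ks\<in>compositions k n. zeta_t t (map (\<lambda>x. a * x) ks))
           = (\<Sum>j<k. (\<Sum>i=1..min n (k - j).
                 (-1) ^ (k - i - j) * real ((k - i) choose (k - n)) * real ((k - j) choose i)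
                 * t ^ (n - i))
               * mzsv (replicate j a) * mzv (replicate (k - j) a))))"
  using S_map_Nkn_expansion[OF assms] sum_zeta_t_expansion[OF _ assms(2,3)]
  unfolding Nkn_coeff_def by blast

end
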